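(* Let $(\Gamma,M)$ be an E-GCM graph, let $\lambda$ be a strongly dominant position, and let $(\gamma_{i_1},\gamma_{i_2},\dots)$ be any game sequence for a numbers game played from $\lambda$. For each $j$ let $\beta_j:=s_{i_1}\cdots s_{i_{j-1}}.\alpha_{i_j}$ (a positive root), so that $\phi_{\beta_j}$ is the positive root functional at node $\gamma_{i_j}$. Then for all $k\ge1$ and all $1\le j<k$, $\phi_{\beta_k}\ne\phi_{\beta_j}$.
   Context: E-GCM $M=(M_{ij})_{i,j\in I_n}$: real, $M_{ii}=2$, $M_{ij}\le0$ ($i\ne j$), $M_{ij}\ne0\iff M_{ji}\ne0$, nonzero $M_{ij}M_{ji}$ either $\ge4$ or $=4\cos^2(\pi/m)$ with $m\ge3$ integer; nodes $\gamma_i$, adjacent iff $M_{ij}\ne0$. Positions $\lambda\in\mathbb{R}^n$, strongly dominant if all $\lambda_i>0$; firing $\gamma_i$ allowed iff $\lambda_i>0$ and replaces $\lambda_j$ by $\lambda_j-M_{ij}\lambda_i$; a game sequence is the sequence of nodes fired in a numbers game that keeps firing nodes with positive population while any exist. $W$: Coxeter group with generators $s_i$, $s_i^2=e$, $(s_is_j)^{m_{ij}}=e$, $m_{ij}=k$ if $M_{ij}M_{ji}=4\cos^2(\pi/k)$ ($k\ge2$), $m_{ij}=\infty$ if $M_{ij}M_{ji}\ge4$. $W$ acts on real $V$ with basis $(\alpha_i)$ via $s_i.\alpha_j=\alpha_j-M_{ij}\alpha_i$; roots are the elements $w.\alpha_i$. For a root $\alpha=\sum c_i\alpha_i$, the root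 functional is $\phi_\alpha(x_1,\dots,x_n)=\sum c_ix_i$ (indeterminates $x_i$); it is positive if all $c_i\ge 0$. *)

theory Defs
  imports Complex_Main "HOL-Library.Extended_Nat"
begin

text \<open>Index set I_n is rendered as {..<n} (0-based). Matrices, positions and
 vectors of V (coefficients w.r.t. the basis alpha_i) are functions on nat,
 only their values on {..<n} matter.\<close>

definition is_EGCM :: "nat \<Rightarrow> (nat \<Rightarrow> nat \<Rightarrow> real) \<Rightarrow> bool" where
  "is_EGCM n M \<longleftrightarrow>
     (\<forall>i<n. M i i = 2) \<and>
     (\<forall>i<n. \<forall>j<n. i \<noteq> j \<longrightarrow> M i j \<le> 0) \<and>
     (\<forall>i<n. \<forall>j<n. M i j \<noteq> 0 \<longleftrightarrow> M j i \<noteq> 0) \<and>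
     (\<forall>i<n. \<forall>j<n. M i j * M j i \<noteq> 0 \<longrightarrow>
         (M i j * M j i \<ge> 4 \<or> (\<exists>m::nat. m \<ge> 3 \<and> M i j * M j i = 4 * (cos (pi / real m))^2)))"

definition strongly_dominant :: "nat \<Rightarrow> (nat \<Rightarrow> real) \<Rightarrow> bool" where
  "strongly_dominant n lam \<longleftrightarrow> (\<forall>i<n. lam i > 0)"

definition fire :: "(nat \<Rightarrow> nat \<Rightarrow> real) \<Rightarrow> nat \<Rightarrow> (nat \<Rightarrow> real) \<Rightarrow> (nat \<Rightarrow> real)" where
  "fire M i lam = (\<lambda>j. lam j - M i j * lam i)"

primrec play :: "(nat \<Rightarrow> nat \<Rightarrow> real) \<Rightarrow> (nat \<Rightarrow> real) \<Rightarrow> (nat \<Rightarrow> nat) \<Rightarrow> nat \<Rightarrow> (nat \<Rightarrow> real)" where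
  "play M lam s 0 = lam"
| "play M lam s (Suc k) = fire M (s k) (play M lam s k)"

definition game_sequence ::
  "nat \<Rightarrow> (nat \<Rightarrow> nat \<Rightarrow> real) \<Rightarrow> (nat \<Rightarrow> real) \<Rightarrow> enat \<Rightarrow> (nat \<Rightarrow> nat) \<Rightarrow> bool" where
  "game_sequence n M lam L s \<longleftrightarrow>
     (\<forall>k. enat k < L \<longrightarrow> s k < n \<and> play M lam s k (s k) > 0) \<and>
     (\<forall>N. L = enat N \<longrightarrow> (\<forall>i<n. play M lam s N i \<le> 0))"

definition simple_root :: "nat \<Rightarrow> (nat \<Rightarrow> real)" where
  "simple_root i = (\<lambda>j. if j = i then 1 else 0)"

definition refl_act :: "nat \<Rightarrow> (nat \<Rightarrow> nat \<Rightarrow> real) \<Rightarrow> nat \<Rightarrow> (nat \<Rightarrow> real) \<Rightarrow> (nat \<Rightarrow> real)" where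
  "refl_act n M i c = c(i := c i - (\<Sum>j<n. M i j * c j))"

text \<open>beta_k = s_{s 0} s_{s 1} ... s_{s (k-1)} . alpha_{s k}  (0-based indexing).\<close>
definition beta :: "nat \<Rightarrow> (nat \<Rightarrow> nat \<Rightarrow> real) \<Rightarrow> (nat \<Rightarrow> nat) \<Rightarrow> nat \<Rightarrow> (nat \<Rightarrow> real)" where
  "beta n M s k = foldr (\<lambda>t v. refl_act n M (s t) v) [0..<k] (simple_root (s k))"

text \<open>Root functional phi_alpha(x_1..x_n) = sum c_i x_i, as a function of the
 indeterminates (equality of such linear forms = equality of coefficients).\<close>
definition root_functional :: "nat \<Rightarrow> (nat \<Rightarrow> real) \<Rightarrow> ((nat \<Rightarrow> real) \<Rightarrow> real)" where
  "root_functional n c = (\<lambda>x. \<Sum>i<n. c i * x i)"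

end

theory Submission
  imports Defs
begin

text \<open>
  Index the fired nodes from 0 and let \<open>\<delta>_t\<close> be the root obtained from \<open>\<alpha>_{i_k}\<close> by applying
  the reflections of the nodes fired at times \<open>k-1, \<dots>, t\<close>. Firing a node is dual to reflecting
  at it, so \<open>\<phi>_{\<delta>_t}\<close> evaluated at the position reached after \<open>t\<close> firings is the population
  \<open>\<lambda>_k(i_k) > 0\<close> of the node fired at time \<open>k\<close>, for every \<open>t \<le> k\<close>.

  If \<open>\<phi>_{\<beta>_k} = \<phi>_{\<beta>_j}\<close>, then \<open>\<beta>_k = \<beta>_j\<close>, and cancelling the common prefix gives
  \<open>\<delta>_j = \<alpha>_{i_j}\<close>, so \<open>\<delta>_{j+1} = -\<alpha>_{i_j}\<close> is negative while \<open>\<delta>_k = \<alpha>_{i_k}\<close> is positive.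
  Every root is positive or negative (Humphreys' induction on length, which reduces to rank-two
  subsystems, where roots are given by Chebyshev polynomials). Hence some \<open>\<delta>_t\<close> is negative while
  \<open>\<delta>_{t+1}\<close> is positive; the two differ only in the coordinate of the node \<open>i_t\<close>, so \<open>\<delta>_{t+1}\<close>
  is a nonnegative multiple of \<open>\<alpha>_{i_t}\<close>, and its functional after \<open>t+1\<close> firings is
  \<open>-c \<lambda>_t(i_t) \<le> 0\<close>, a contradiction.
\<close>

section \<open>Words in the simple reflections acting on V\<close>

primrec word_act :: "nat \<Rightarrow> (nat \<Rightarrow> nat \<Rightarrow> real) \<Rightarrow> nat list \<Rightarrow> (nat \<Rightarrow> real) \<Rightarrow> nat \<Rightarrow> real" where
  "word_act n M [] v = v"
| "word_act n M (i # ws) v = refl_act n M i (word_act n M ws v)"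

definition coroot :: "nat \<Rightarrow> (nat \<Rightarrow> nat \<Rightarrow> real) \<Rightarrow> nat \<Rightarrow> (nat \<Rightarrow> real) \<Rightarrow> real" where
  "coroot n M i v = (\<Sum>j<n. M i j * v j)"

definition nonneg_coeffs :: "(nat \<Rightarrow> real) \<Rightarrow> bool" where
  "nonneg_coeffs v \<longleftrightarrow> (\<forall>i. 0 \<le> v i)"

lemma refl_act_eq_coroot: "refl_act n M i v = v(i := v i - coroot n M i v)"
  by (simp add: refl_act_def coroot_def)

lemma word_act_append: "word_act n M (xs @ ys) v = word_act n M xs (word_act n M ys v)"
  by (induction xs) auto

lemma word_act_append_comp: "word_act n M (xs @ ys) = word_act n M xs \<circ> word_act n M ys"
  by (simp add: fun_eq_iff word_act_append)

lemma foldr_refl_act_eq_word_act: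
  "foldr (\<lambda>t. refl_act n M (s t)) ts v = word_act n M (map s ts) v"
  by (induction ts) auto

lemma beta_eq_word_act: "beta n M s k = word_act n M (map s [0..<k]) (simple_root (s k))"
  by (simp add: beta_def foldr_refl_act_eq_word_act)

lemma coroot_add: "coroot n M i (\<lambda>l. u l + v l) = coroot n M i u + coroot n M i v"
  by (simp add: coroot_def distrib_left sum.distrib)

lemma coroot_diff: "coroot n M i (\<lambda>l. u l - v l) = coroot n M i u - coroot n M i v"
  by (simp add: coroot_def right_diff_distrib sum_subtractf)

lemma coroot_scale: "coroot n M i (\<lambda>l. a * v l) = a * coroot n M i v"
  by (simp add: coroot_def sum_distrib_left algebra_simps)

lemma coroot_simple_root: "j < n \<Longrightarrow> coroot n M i (simple_root j) = M i j"
  by (simp add: coroot_def simple_root_def if_distrib cong: if_cong)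

lemma coroot_fun_upd: "j < n \<Longrightarrow> coroot n M i (v(j := x)) = coroot n M i v + M i j * (x - v j)"
  by (simp add: coroot_def sum.remove algebra_simps)

lemma refl_act_add: "refl_act n M i (\<lambda>l. u l + v l) = (\<lambda>l. refl_act n M i u l + refl_act n M i v l)"
  by (simp add: refl_act_eq_coroot coroot_add fun_eq_iff)

lemma refl_act_scale: "refl_act n M i (\<lambda>l. a * v l) = (\<lambda>l. a * refl_act n M i v l)"
  by (simp add: refl_act_eq_coroot coroot_scale fun_eq_iff right_diff_distrib)

lemma word_act_add: "word_act n M ws (\<lambda>l. u l + v l) = (\<lambda>l. word_act n M ws u l + word_act n M ws v l)"
  by (induction ws) (simp_all add: refl_act_add)

lemma word_act_scale: "word_act n M ws (\<lambda>l. a * v l) = (\<lambda>l. a * word_act n M ws v l)"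
  by (induction ws) (simp_all add: refl_act_scale)

lemma word_act_uminus: "word_act n M ws (\<lambda>l. - v l) = (\<lambda>l. - word_act n M ws v l)"
  using word_act_scale[of n M ws "-1" v] by simp

lemma refl_act_refl_act: "i < n \<Longrightarrow> M i i = 2 \<Longrightarrow> refl_act n M i (refl_act n M i v) = v"
  by (simp add: refl_act_eq_coroot coroot_fun_upd fun_eq_iff)

lemma refl_act_simple_root:
  assumes "i < n" "M i i = 2"
  shows "refl_act n M i (simple_root i) = (\<lambda>l. - simple_root i l)"
proof -
  have "coroot n M i (simple_root i) = 2"
    using assms by (simp add: coroot_simple_root)
  then show ?thesis
    by (simp add: refl_act_eq_coroot fun_eq_iff simple_root_def)
qed

lemma refl_act_commute:
  assumes "i < n" "j < n" "M i j = 0" "M j i = 0"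
  shows "refl_act n M i (refl_act n M j v) = refl_act n M j (refl_act n M i v)"
  using assms by (auto simp: refl_act_eq_coroot coroot_fun_upd fun_eq_iff)

lemma word_act_fixed:
  assumes "set ws \<subseteq> I" "\<And>i. i \<in> I \<Longrightarrow> coroot n M i v = 0"
  shows "word_act n M ws v = v"
  using assms by (induction ws) (auto simp: refl_act_eq_coroot)

section \<open>Chebyshev polynomials and alternating words\<close>

fun chebyshev :: "real \<Rightarrow> nat \<Rightarrow> real" where
  "chebyshev c 0 = 0"
| "chebyshev c (Suc 0) = 1"
| "chebyshev c (Suc (Suc k)) = c * chebyshev c (Suc k) - chebyshev c k"

lemma chebyshev_nonneg:
  assumes "2 \<le> c"
  shows "0 \<le> chebyshev c k"
proof -
  have "0 \<le> chebyshev c k \<and> chebyshev c k \<le> chebyshev c (Suc k)"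
  proof (induction k)
    case 0
    show ?case by simp
  next
    case (Suc k)
    have "chebyshev c (Suc (Suc k)) - chebyshev c (Suc k)
        = (c - 2) * chebyshev c (Suc k) + (chebyshev c (Suc k) - chebyshev c k)"
      by (simp add: algebra_simps)
    moreover have "0 \<le> (c - 2) * chebyshev c (Suc k)"
      using Suc assms by simp
    ultimately show ?case
      using Suc by linarith
  qed
  then show ?thesis ..
qed

lemma chebyshev_cos:
  assumes "sin t \<noteq> 0"
  shows "chebyshev (2 * cos t) k = sin (real k * t) / sin t"
proof -
  have sin_rec: "sin ((2 + real k) * t) = 2 * cos t * sin ((1 + real k) * t) - sin (real k * t)"
    for k
  proof -
    have "sin (x + t) = 2 * cos t * sin x - sin (x - t)" for x
      by (simp add: sin_add sin_diff algebra_simps)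
    from this[of "(1 + real k) * t"] show ?thesis
      by (simp add: algebra_simps)
  qed
  have "chebyshev (2 * cos t) k = sin (real k * t) / sin t
      \<and> chebyshev (2 * cos t) (Suc k) = sin (real (Suc k) * t) / sin t"
    by (induction k) (use assms in \<open>simp_all add: sin_rec diff_divide_distrib\<close>)
  then show ?thesis ..
qed

lemma chebyshev_cos_pi_div_nonneg:
  assumes "2 \<le> m" "j \<le> m"
  shows "0 \<le> chebyshev (2 * cos (pi / real m)) j"
proof -
  have "0 < pi / real m" "pi / real m < pi"
    using assms(1) by (auto simp: field_simps)
  moreover have "real j * (pi / real m) \<le> pi"
    using assms by (simp add: field_simps)
  ultimately have "0 \<le> sin (real j * (pi / real m))" "0 < sin (pi / real m)"
    by (auto intro: sin_ge_zero sin_gt_zero)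
  then show ?thesis
    by (simp add: chebyshev_cos)
qed

text \<open>\<open>alt_word s s' k\<close> is the alternating word \<open>[\<dots>, s, s']\<close> of length \<open>k\<close>; its last
  letter \<open>s'\<close> is the first reflection to act.\<close>

primrec alt_word :: "nat \<Rightarrow> nat \<Rightarrow> nat \<Rightarrow> nat list" where
  "alt_word s s' 0 = []"
| "alt_word s s' (Suc k) = (if even k then s' else s) # alt_word s s' k"

lemma length_alt_word [simp]: "length (alt_word s s' k) = k"
  by (induction k) auto

lemma set_alt_word: "set (alt_word s s' k) \<subseteq> {s, s'}"
  by (induction k) auto

lemma alt_word_Suc_swap: "alt_word s' s (Suc k) = alt_word s s' k @ [s]"
  by (induction k) auto

lemma alt_word_add: "\<exists>p. alt_word s s' (m + j) = p @ alt_word s s' m"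
proof (induction j)
  case 0
  show ?case by simp
next
  case (Suc j)
  then obtain p where "alt_word s s' (m + j) = p @ alt_word s s' m"
    by blast
  then show ?case
    by (intro exI[of _ "(if even (m + j) then s' else s) # p"]) simp
qed

lemma distinct_adj_eq_alt_word:
  assumes "set x \<subseteq> {s, s'}" "distinct_adj x" "x = [] \<or> last x = s'"
  shows "x = alt_word s s' (length x)"
  using assms
proof (induction x)
  case Nil
  show ?case by simp
next
  case (Cons t x)
  show ?case
  proof (cases "x = []")
    case True
    then show ?thesis
      using Cons.prems by simp
  next
    case False
    then obtain k where k: "length x = Suc k"
      by (cases x) auto
    have "x = alt_word s s' (length x)"
      using Cons False by (auto simp: distinct_adj_Cons)
    then have x: "x = (if even k then s' else s) # alt_word s s' k"
      by (simp add: k)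
    then have "t = (if even k then s else s')"
      using Cons.prems(1,2) by (auto simp: distinct_adj_Cons)
    then show ?thesis
      using x k by simp
  qed
qed

lemma not_distinct_adj_split: "\<not> distinct_adj xs \<Longrightarrow> \<exists>p t q. xs = p @ t # t # q"
proof (induction xs)
  case Nil
  then show ?case by simp
next
  case (Cons a xs)
  then consider "xs \<noteq> []" "a = hd xs" | "\<not> distinct_adj xs"
    by (auto simp: distinct_adj_Cons)
  then show ?case
  proof cases
    case 1
    then show ?thesis
      by (metis append_Nil list.collapse)
  next
    case 2
    then obtain p t q where "xs = p @ t # t # q"
      using Cons.IH by blast
    then show ?thesis
      by (metis append_Cons)
  qed
qed

section \<open>Rank-two subsystems\<close>

locale egcm =
  fixes n :: nat and M :: "nat \<Rightarrow> nat \<Rightarrow> real"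
  assumes is_egcm: "is_EGCM n M"
begin

lemma diag_eq_2: "i < n \<Longrightarrow> M i i = 2"
  using is_egcm by (simp add: is_EGCM_def)

lemma off_diag_nonpos: "i < n \<Longrightarrow> j < n \<Longrightarrow> i \<noteq> j \<Longrightarrow> M i j \<le> 0"
  using is_egcm by (simp add: is_EGCM_def)

lemma rank_two_cases [consumes 2]:
  assumes "i < n" "j < n"
  obtains (commuting) "M i j = 0" "M j i = 0"
    | (infinite) "4 \<le> M i j * M j i"
    | (finite) m :: nat where "3 \<le> m" "M i j * M j i = 4 * (cos (pi / real m))\<^sup>2"
proof (cases "M i j = 0")
  case True
  then show ?thesis
    using commuting is_egcm assms by (simp add: is_EGCM_def)
next
  case False
  then have "M i j * M j i \<noteq> 0"
    using is_egcm assms by (simp add: is_EGCM_def)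
  then show ?thesis
    using infinite finite is_egcm assms unfolding is_EGCM_def by blast
qed

lemma word_act_rev_cancel: "set ws \<subseteq> {..<n} \<Longrightarrow> word_act n M (rev ws) (word_act n M ws v) = v"
  by (induction ws arbitrary: v) (auto simp: word_act_append refl_act_refl_act diag_eq_2)

lemma word_act_inj: "set ws \<subseteq> {..<n} \<Longrightarrow> word_act n M ws u = word_act n M ws v \<Longrightarrow> u = v"
  by (metis word_act_rev_cancel)

lemma refl_act_pair_fst:
  assumes "s \<noteq> s'" "s < n" "s' < n"
  shows "refl_act n M s (\<lambda>l. x * simple_root s l + y * simple_root s' l)
       = (\<lambda>l. (- x - M s s' * y) * simple_root s l + y * simple_root s' l)"
proof -
  have "coroot n M s (\<lambda>l. x * simple_root s l + y * simple_root s' l) = 2 * x + M s s' * y"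
    using assms by (simp add: coroot_add coroot_scale coroot_simple_root diag_eq_2)
  then show ?thesis
    using assms by (auto simp: refl_act_eq_coroot simple_root_def)
qed

lemma refl_act_pair_snd:
  assumes "s \<noteq> s'" "s < n" "s' < n"
  shows "refl_act n M s' (\<lambda>l. x * simple_root s l + y * simple_root s' l)
       = (\<lambda>l. x * simple_root s l + (- y - M s' s * x) * simple_root s' l)"
proof -
  have "coroot n M s' (\<lambda>l. x * simple_root s l + y * simple_root s' l) = M s' s * x + 2 * y"
    using assms by (simp add: coroot_add coroot_scale coroot_simple_root diag_eq_2)
  then show ?thesis
    using assms by (auto simp: refl_act_eq_coroot simple_root_def)
qed

lemma word_act_alt_word_simple_root:
  assumes "s \<noteq> s'" "s < n" "s' < n" "0 < c" "c * c = M s s' * M s' s"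
  shows "word_act n M (alt_word s s' k) (simple_root s) =
    (\<lambda>l. chebyshev c (if even k then Suc k else k) * simple_root s l
       + - M s' s / c * chebyshev c (if even k then k else Suc k) * simple_root s' l)"
proof (induction k)
  case 0
  show ?case by simp
next
  case (Suc k)
  show ?case
  proof (cases "even k")
    case True
    have coeff: "- (- M s' s / c * chebyshev c k) - M s' s * chebyshev c (Suc k)
        = - M s' s / c * chebyshev c (Suc (Suc k))"
      using assms(4) by (simp add: field_simps)
    have "word_act n M (alt_word s s' (Suc k)) (simple_root s) = refl_act n M s'
        (\<lambda>l. chebyshev c (Suc k) * simple_root s l + - M s' s / c * chebyshev c k * simple_root s' l)"
      using Suc.IH True by simp
    then show ?thesis
      unfolding refl_act_pair_snd[OF assms(1-3)] coeff using True by simp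
  next
    case False
    have "M s s' * (- M s' s / c * x) = - (c * c) / c * x" for x
      unfolding assms(5) by simp
    then have coeff: "- chebyshev c k - M s s' * (- M s' s / c * chebyshev c (Suc k))
        = chebyshev c (Suc (Suc k))"
      using assms(4) by simp
    have "word_act n M (alt_word s s' (Suc k)) (simple_root s) = refl_act n M s
        (\<lambda>l. chebyshev c k * simple_root s l + - M s' s / c * chebyshev c (Suc k) * simple_root s' l)"
      using Suc.IH False by simp
    then show ?thesis
      unfolding refl_act_pair_fst[OF assms(1-3)] coeff using False by simp
  qed
qed

lemma alt_word_braid_simple_root:
  assumes "s \<noteq> s'" "s < n" "s' < n" "3 \<le> m" "M s s' * M s' s = 4 * (cos (pi / real m))\<^sup>2"
  shows "word_act n M (alt_word s s' m) (simple_root s) = word_act n M (alt_word s' s m) (simple_root s)"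
proof -
  define t where "t = pi / real m"
  define c where "c = 2 * cos t"
  have t: "0 < t" "t < pi / 2"
    using assms(4) by (auto simp: t_def field_simps)
  have c: "0 < c" "c * c = M s s' * M s' s"
    using t assms(5) by (simp_all add: c_def t_def cos_gt_zero power2_eq_square)
  have sin_t: "sin t \<noteq> 0"
    using t sin_gt_zero[of t] by linarith
  have m_t: "real m * t = pi"
    using assms(4) by (simp add: t_def)
  obtain k where m: "m = Suc k"
    using assms(4) by (cases m) auto
  have k_t: "real k * t = pi - t"
    using m_t by (simp add: m algebra_simps)
  have "chebyshev c k = 1" "chebyshev c m = 0" "chebyshev c (Suc m) = -1"
    using sin_t by (simp_all add: c_def chebyshev_cos m_t k_t distrib_right sin_add)
  moreover have "word_act n M (alt_word s' s m) (simple_root s)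
      = (\<lambda>l. - word_act n M (alt_word s s' k) (simple_root s) l)"
    using assms(2) unfolding m alt_word_Suc_swap
    by (simp add: word_act_append refl_act_simple_root diag_eq_2 word_act_uminus)
  ultimately show ?thesis
    unfolding word_act_alt_word_simple_root[OF assms(1-3) c]
    by (auto simp: m fun_eq_iff)
qed

lemma alt_word_braid:
  assumes "s \<noteq> s'" "s < n" "s' < n" "3 \<le> m" "M s s' * M s' s = 4 * (cos (pi / real m))\<^sup>2"
  shows "word_act n M (alt_word s s' m) v = word_act n M (alt_word s' s m) v"
proof -
  have on_s: "word_act n M (alt_word s s' m) (simple_root s) = word_act n M (alt_word s' s m) (simple_root s)"
    by (rule alt_word_braid_simple_root[OF assms])
  have on_s': "word_act n M (alt_word s s' m) (simple_root s') = word_act n M (alt_word s' s m) (simple_root s')"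
    using alt_word_braid_simple_root[of s' s m] assms by (simp add: mult.commute)
  have "0 < sin (pi / real m)"
    using assms(4) by (intro sin_gt_zero) (auto simp: field_simps)
  then have "(cos (pi / real m))\<^sup>2 < 1"
    by (simp add: cos_squared_eq)
  define D where "D = 4 - M s s' * M s' s"
  have D: "0 < D"
    using assms(5) \<open>(cos (pi / real m))\<^sup>2 < 1\<close> by (simp add: D_def)
  txt \<open>As \<open>M s s' * M s' s < 4\<close>, the Cartan block of \<open>s, s'\<close> is invertible, so \<open>v\<close> splits into a
    combination of \<open>\<alpha>\<^sub>s, \<alpha>\<^sub>s'\<close> plus a vector killed by both coroots, which both words fix.\<close>
  define X where "X = (2 * coroot n M s v - M s s' * coroot n M s' v) / D"
  define Y where "Y = (2 * coroot n M s' v - M s' s * coroot n M s v) / D"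
  define v' where "v' = (\<lambda>l. v l - (X * simple_root s l + Y * simple_root s' l))"
  have "X * 2 + Y * M s s' = coroot n M s v" "X * M s' s + Y * 2 = coroot n M s' v"
    using D unfolding X_def Y_def by (simp_all add: field_simps) (simp_all add: D_def algebra_simps)
  moreover have "coroot n M i v' = coroot n M i v - (X * M i s + Y * M i s')" for i
    using assms(2,3) by (simp add: v'_def coroot_diff coroot_add coroot_scale coroot_simple_root)
  ultimately have "coroot n M i v' = 0" if "i \<in> {s, s'}" for i
    using that assms(2,3) by (auto simp: diag_eq_2)
  then have fixed: "word_act n M (alt_word i j m) v' = v'" if "{i, j} = {s, s'}" for i j
    using that set_alt_word[of i j m] by (intro word_act_fixed[where I = "{s, s'}"]) auto
  have v: "v = (\<lambda>l. v' l + (X * simple_root s l + Y * simple_root s' l))"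
    by (simp add: v'_def)
  show ?thesis
    by (subst (1 2) v) (simp only: word_act_add word_act_scale fixed insert_commute on_s on_s')
qed

text \<open>Word length is measured through the action on \<open>V\<close>, so no presentation of \<open>W\<close> by
  generators and relations is needed.\<close>

definition word_length_ge :: "nat set \<Rightarrow> ((nat \<Rightarrow> real) \<Rightarrow> nat \<Rightarrow> real) \<Rightarrow> nat \<Rightarrow> bool" where
  "word_length_ge I f k \<longleftrightarrow> (\<forall>ws. set ws \<subseteq> I \<longrightarrow> word_act n M ws = f \<longrightarrow> k \<le> length ws)"

lemma word_length_geD: "word_length_ge I f k \<Longrightarrow> set ws \<subseteq> I \<Longrightarrow> word_act n M ws = f \<Longrightarrow> k \<le> length ws"
  by (simp add: word_length_ge_def)

lemma word_length_ge_append: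
  assumes "word_length_ge {..<n} (word_act n M zs \<circ> f) (length zs + k)" "set zs \<subseteq> {..<n}" "I \<subseteq> {..<n}"
  shows "word_length_ge I f k"
  unfolding word_length_ge_def
proof (intro allI impI)
  fix ws
  assume "set ws \<subseteq> I" "word_act n M ws = f"
  then have "word_act n M (zs @ ws) = word_act n M zs \<circ> f"
    by (auto simp: word_act_append)
  then have "length zs + k \<le> length (zs @ ws)"
    using \<open>set ws \<subseteq> I\<close> assms(2,3) by (intro word_length_geD[OF assms(1)]) auto
  then show "k \<le> length ws"
    by simp
qed

lemma alt_word_length_lt_braid:
  assumes "s < n" "1 \<le> m" "\<And>v. word_act n M (alt_word s s' m) v = word_act n M (alt_word s' s m) v"
    and "word_length_ge {s, s'} (word_act n M (alt_word s s' k) \<circ> refl_act n M s) k"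
  shows "k < m"
proof (rule ccontr)
  assume "\<not> k < m"
  then obtain j where "k = m + j"
    using le_Suc_ex by (auto simp: not_less)
  then obtain p where p: "alt_word s s' k = p @ alt_word s s' m"
    using alt_word_add by blast
  obtain m' where m: "m = Suc m'"
    using assms(2) by (cases m) auto
  have "set (p @ alt_word s s' m') \<subseteq> {s, s'}"
    using set_alt_word[of s s' k] set_alt_word[of s s' m'] p by auto
  moreover have "word_act n M (p @ alt_word s s' m') = word_act n M (alt_word s s' k) \<circ> refl_act n M s"
  proof
    fix v
    have "word_act n M (alt_word s s' k) (refl_act n M s v)
        = word_act n M p (word_act n M (alt_word s' s m) (refl_act n M s v))"
      using p assms(3) by (simp add: word_act_append)
    also have "\<dots> = word_act n M (p @ alt_word s s' m') v"
      using assms(1) unfolding m alt_word_Suc_swap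
      by (simp add: word_act_append refl_act_refl_act diag_eq_2)
    finally show "word_act n M (p @ alt_word s s' m') v = (word_act n M (alt_word s s' k) \<circ> refl_act n M s) v"
      by simp
  qed
  ultimately have "k \<le> length (p @ alt_word s s' m')"
    by (rule word_length_geD[OF assms(4)])
  moreover have "k = length p + m"
    using arg_cong[OF p, of length] by simp
  ultimately show False
    using m by simp
qed

lemma dihedral_word_eq_alt_word:
  assumes "s < n" "s' < n" "set x \<subseteq> {s, s'}"
    and "word_length_ge {s, s'} (word_act n M x) (length x)"
    and "word_length_ge {s, s'} (word_act n M x \<circ> refl_act n M s) (length x)"
  shows "x = alt_word s s' (length x)"
proof (rule distinct_adj_eq_alt_word[OF assms(3)])
  show "distinct_adj x"
  proof (rule ccontr)
    assume "\<not> distinct_adj x"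
    then obtain p t q where x: "x = p @ t # t # q"
      using not_distinct_adj_split by blast
    then have "t < n"
      using assms(1-3) by auto
    then have "word_act n M (p @ q) = word_act n M x"
      by (auto simp: x word_act_append refl_act_refl_act diag_eq_2)
    moreover have "set (p @ q) \<subseteq> {s, s'}"
      using assms(3) x by auto
    ultimately have "length x \<le> length (p @ q)"
      using word_length_geD[OF assms(4)] by blast
    then show False
      by (simp add: x)
  qed
  show "x = [] \<or> last x = s'"
  proof (rule ccontr)
    assume "\<not> (x = [] \<or> last x = s')"
    then have "x \<noteq> []" "last x \<noteq> s'"
      by auto
    moreover from this have "last x \<in> {s, s'}"
      using assms(3) last_in_set by blast
    ultimately have x: "x = butlast x @ [s]"
      by auto
    have "word_act n M (butlast x) = word_act n M x \<circ> refl_act n M s"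
      by (subst (2) x) (auto simp: word_act_append refl_act_refl_act diag_eq_2 assms(1))
    moreover have "set (butlast x) \<subseteq> {s, s'}"
      using assms(3) by (meson in_set_butlastD subset_iff)
    ultimately have "length x \<le> length (butlast x)"
      using word_length_geD[OF assms(5)] by blast
    then show False
      using \<open>x \<noteq> []\<close> by (cases x rule: rev_exhaust) auto
  qed
qed

lemma alt_word_simple_root_nonneg_comb:
  assumes "s \<noteq> s'" "s < n" "s' < n" "0 < c" "c * c = M s s' * M s' s"
    and "\<And>j. j \<le> Suc k \<Longrightarrow> 0 \<le> chebyshev c j"
  shows "\<exists>a b. 0 \<le> a \<and> 0 \<le> b \<and>
    word_act n M (alt_word s s' k) (simple_root s) = (\<lambda>l. a * simple_root s l + b * simple_root s' l)"
proof (intro exI conjI)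
  show "word_act n M (alt_word s s' k) (simple_root s) =
    (\<lambda>l. chebyshev c (if even k then Suc k else k) * simple_root s l
       + - M s' s / c * chebyshev c (if even k then k else Suc k) * simple_root s' l)"
    by (rule word_act_alt_word_simple_root[OF assms(1-5)])
  have "0 \<le> - M s' s / c"
    using off_diag_nonpos[of s' s] assms(1-4) by (simp add: divide_nonpos_pos)
  then show "0 \<le> - M s' s / c * chebyshev c (if even k then k else Suc k)"
    using assms(6) by (intro mult_nonneg_nonneg) auto
  show "0 \<le> chebyshev c (if even k then Suc k else k)"
    using assms(6) by simp
qed

lemma dihedral_root_nonneg_comb:
  assumes "s \<noteq> s'" "s < n" "s' < n" "set x \<subseteq> {s, s'}"
    and "word_length_ge {s, s'} (word_act n M x) (length x)"
    and "word_length_ge {s, s'} (word_act n M x \<circ> refl_act n M s) (length x)"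
  shows "\<exists>a b. 0 \<le> a \<and> 0 \<le> b \<and>
    word_act n M x (simple_root s) = (\<lambda>l. a * simple_root s l + b * simple_root s' l)"
proof -
  define k where "k = length x"
  have x: "x = alt_word s s' k"
    unfolding k_def by (rule dihedral_word_eq_alt_word[OF assms(2-6)])
  have k_lt: "k < m"
    if "1 \<le> m" "\<And>v. word_act n M (alt_word s s' m) v = word_act n M (alt_word s' s m) v" for m
    using alt_word_length_lt_braid[OF assms(2) that] assms(6) by (simp add: x)
  from assms(2,3) show ?thesis
  proof (cases rule: rank_two_cases)
    case commuting
    have "k < 2"
      using assms(2,3) commuting
      by (intro k_lt) (simp_all add: numeral_2_eq_2 refl_act_commute)
    then have "x = [] \<or> x = [s']"
      by (auto simp: x numeral_2_eq_2 less_Suc_eq)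
    moreover have "refl_act n M s' (simple_root s) = simple_root s"
      using assms(2) commuting by (simp add: refl_act_eq_coroot coroot_simple_root)
    ultimately show ?thesis
      by (intro exI[of _ 1] exI[of _ 0]) auto
  next
    case infinite
    define c where "c = sqrt (M s s' * M s' s)"
    have "2 \<le> c"
      using infinite real_sqrt_le_mono[of 4] by (simp add: c_def)
    moreover have "c * c = M s s' * M s' s"
      using infinite by (simp add: c_def)
    ultimately show ?thesis
      unfolding x by (intro alt_word_simple_root_nonneg_comb[OF assms(1-3)] chebyshev_nonneg) auto
  next
    case (finite m)
    have "k < m"
      using finite alt_word_braid[OF assms(1-3) finite] by (intro k_lt) auto
    moreover have "0 < 2 * cos (pi / real m)"
      using finite(1) by (intro mult_pos_pos cos_gt_zero) (auto simp: field_simps)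
    moreover have "2 * cos (pi / real m) * (2 * cos (pi / real m)) = M s s' * M s' s"
      using finite(2) by (simp add: power2_eq_square)
    ultimately show ?thesis
      unfolding x using finite(1)
      by (intro alt_word_simple_root_nonneg_comb[OF assms(1-3), where c = "2 * cos (pi / real m)"]
          chebyshev_cos_pi_div_nonneg) auto
  qed
qed

section \<open>Every root is positive or negative\<close>

definition reduced_word :: "nat list \<Rightarrow> bool" where
  "reduced_word xs \<longleftrightarrow> set xs \<subseteq> {..<n} \<and> word_length_ge {..<n} (word_act n M xs) (length xs)"

lemma exists_reduced_word:
  assumes "set ws \<subseteq> {..<n}"
  obtains xs where "reduced_word xs" "word_act n M xs = word_act n M ws"
proof -
  let ?P = "\<lambda>xs. set xs \<subseteq> {..<n} \<and> word_act n M xs = word_act n M ws"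
  obtain xs where "?P xs" "\<And>ys. ?P ys \<Longrightarrow> length xs \<le> length ys"
    using ex_has_least_nat[of ?P ws length] assms by blast
  then show ?thesis
    by (intro that[of xs]) (auto simp: reduced_word_def word_length_ge_def)
qed

lemma reduced_word_append_left:
  assumes "reduced_word (xs @ ys)"
  shows "reduced_word xs"
  unfolding reduced_word_def word_length_ge_def
proof (intro conjI allI impI)
  show "set xs \<subseteq> {..<n}"
    using assms by (simp add: reduced_word_def)
  fix ws
  assume "set ws \<subseteq> {..<n}" "word_act n M ws = word_act n M xs"
  then have "length (xs @ ys) \<le> length (ws @ ys)"
    using assms unfolding reduced_word_def
    by (intro word_length_geD[of "{..<n}" "word_act n M (xs @ ys)"]) (auto simp: word_act_append_comp)
  then show "length xs \<le> length ws"
    by simp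
qed

lemma reduced_word_dihedral_factor:
  assumes "reduced_word xs" "xs = ys @ [s']" "s < n"
  obtains zs x where "word_act n M (zs @ x) = word_act n M xs" "set x \<subseteq> {s, s'}"
    "length zs + length x = length xs" "length zs < length xs" "reduced_word zs"
    "\<forall>t\<in>{s, s'}. word_length_ge {..<n} (word_act n M zs \<circ> refl_act n M t) (length zs)"
proof -
  have xs: "set xs \<subseteq> {..<n}" "word_length_ge {..<n} (word_act n M xs) (length xs)"
    using assms(1) by (auto simp: reduced_word_def)
  define P where "P = (\<lambda>zs x. set zs \<subseteq> {..<n} \<and> set x \<subseteq> {s, s'}
    \<and> word_act n M (zs @ x) = word_act n M xs \<and> length zs + length x = length xs)"
  have "P ys [s']"
    using assms(2) xs(1) by (auto simp: P_def)
  then obtain q where "P (fst q) (snd q)" "\<forall>q'. P (fst q') (snd q') \<longrightarrow> length (fst q) \<le> length (fst q')"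
    using ex_has_least_nat[of "\<lambda>q. P (fst q) (snd q)" "(ys, [s'])" "\<lambda>q. length (fst q)"] by auto
  then obtain zs x where P: "P zs x" and least: "\<And>zs' x'. P zs' x' \<Longrightarrow> length zs \<le> length zs'"
    by (metis fst_conv snd_conv)
  have zs_x: "set zs \<subseteq> {..<n}" "set x \<subseteq> {s, s'}" "\<And>v. word_act n M zs (word_act n M x v) = word_act n M xs v"
    "length zs + length x = length xs"
    using P by (auto simp: P_def fun_eq_iff word_act_append)
  have "length zs < length xs"
    using least[OF \<open>P ys [s']\<close>] assms(2) by simp
  moreover have "reduced_word (zs @ x)"
    using xs zs_x P assms(2,3) by (auto simp: reduced_word_def P_def)
  then have "reduced_word zs"
    by (rule reduced_word_append_left)
  moreover have "word_length_ge {..<n} (word_act n M zs \<circ> refl_act n M t) (length zs)"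
    if t: "t \<in> {s, s'}" for t
    unfolding word_length_ge_def
  proof (intro allI impI)
    fix ws
    assume ws: "set ws \<subseteq> {..<n}" "word_act n M ws = word_act n M zs \<circ> refl_act n M t"
    have "t < n"
      using t assms(2,3) xs(1) by auto
    have act: "word_act n M (ws @ t # x) = word_act n M xs"
      using ws(2) zs_x(3) \<open>t < n\<close> by (simp add: fun_eq_iff word_act_append refl_act_refl_act diag_eq_2)
    moreover have "set (ws @ t # x) \<subseteq> {..<n}"
      using ws(1) zs_x(2) \<open>t < n\<close> assms(2,3) xs(1) by auto
    ultimately have "length xs \<le> length (ws @ t # x)"
      by (intro word_length_geD[OF xs(2)])
    show "length zs \<le> length ws"
    proof (rule ccontr)
      assume "\<not> length zs \<le> length ws"
      then have "P ws (t # x)"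
        using ws(1) zs_x(2,4) t act \<open>length xs \<le> length (ws @ t # x)\<close> by (auto simp: P_def)
      then show False
        using least \<open>\<not> length zs \<le> length ws\<close> by blast
    qed
  qed
  ultimately show ?thesis
    using zs_x P by (intro that[of zs x]) (auto simp: P_def)
qed

lemma snoc_ne_if_word_length_ge:
  assumes "s < n" "word_length_ge {..<n} (word_act n M (ys @ [s']) \<circ> refl_act n M s) (length (ys @ [s']))"
    and "set (ys @ [s']) \<subseteq> {..<n}"
  shows "s' \<noteq> s"
proof
  assume "s' = s"
  then have "word_act n M ys = word_act n M (ys @ [s']) \<circ> refl_act n M s"
    using assms(1) by (simp add: fun_eq_iff word_act_append refl_act_refl_act diag_eq_2)
  then have "length (ys @ [s']) \<le> length ys"
    using assms(3) by (intro word_length_geD[OF assms(2)]) auto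
  then show False
    by simp
qed

text \<open>Humphreys, Reflection Groups and Coxeter Groups, Thm. 5.4: write \<open>w = z x\<close> with \<open>x\<close> a word
  in \<open>s\<close> and the last letter \<open>s'\<close> of \<open>w\<close>, and \<open>z\<close> as short as possible; then \<open>z\<close> is handled
  by induction and \<open>x\<close> by the rank-two computation.\<close>

lemma reduced_word_simple_root_nonneg:
  assumes "reduced_word xs" "s < n"
    and "word_length_ge {..<n} (word_act n M xs \<circ> refl_act n M s) (length xs)"
  shows "nonneg_coeffs (word_act n M xs (simple_root s))"
  using assms
proof (induction "length xs" arbitrary: xs s rule: less_induct)
  case less
  show ?case
  proof (cases xs rule: rev_exhaust)
    case Nil
    then show ?thesis
      by (simp add: nonneg_coeffs_def simple_root_def)
  next
    case (snoc ys s')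
    have xs: "set xs \<subseteq> {..<n}" "word_length_ge {..<n} (word_act n M xs) (length xs)"
      using less.prems(1) by (auto simp: reduced_word_def)
    then have "s' < n"
      using snoc by auto
    have "s' \<noteq> s"
      using less.prems(2,3) xs(1) unfolding snoc by (rule snoc_ne_if_word_length_ge)
    obtain zs x where zs_x: "word_act n M (zs @ x) = word_act n M xs" and x: "set x \<subseteq> {s, s'}"
      and len: "length zs + length x = length xs" "length zs < length xs" and "reduced_word zs"
      and zs_t: "\<forall>t\<in>{s, s'}. word_length_ge {..<n} (word_act n M zs \<circ> refl_act n M t) (length zs)"
      by (rule reduced_word_dihedral_factor[OF less.prems(1) snoc less.prems(2)])
    have zs: "set zs \<subseteq> {..<n}"
      using \<open>reduced_word zs\<close> by (simp add: reduced_word_def)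
    have "{s, s'} \<subseteq> {..<n}"
      using less.prems(2) \<open>s' < n\<close> by auto
    have zs_roots: "nonneg_coeffs (word_act n M zs (simple_root t))" if "t \<in> {s, s'}" for t
      using less.hyps[OF len(2) \<open>reduced_word zs\<close> _ zs_t[rule_format, OF that]] that \<open>{s, s'} \<subseteq> {..<n}\<close> by auto
    have "word_length_ge {s, s'} (word_act n M x) (length x)"
      using xs(2) zs_x len(1)
      by (intro word_length_ge_append[OF _ zs \<open>{s, s'} \<subseteq> {..<n}\<close>])
        (simp add: word_act_append_comp[symmetric])
    moreover have "word_length_ge {s, s'} (word_act n M x \<circ> refl_act n M s) (length x)"
      using less.prems(3) zs_x len(1)
      by (intro word_length_ge_append[OF _ zs \<open>{s, s'} \<subseteq> {..<n}\<close>])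
        (simp add: word_act_append_comp[symmetric] comp_assoc[symmetric])
    ultimately obtain a b where ab: "0 \<le> a" "0 \<le> b"
      "word_act n M x (simple_root s) = (\<lambda>l. a * simple_root s l + b * simple_root s' l)"
      using dihedral_root_nonneg_comb[OF \<open>s' \<noteq> s\<close>[symmetric] less.prems(2) \<open>s' < n\<close> x] by blast
    have "word_act n M xs (simple_root s)
        = (\<lambda>l. a * word_act n M zs (simple_root s) l + b * word_act n M zs (simple_root s') l)"
      using fun_cong[OF zs_x, of "simple_root s"] ab(3) by (simp add: word_act_append word_act_add word_act_scale)
    then show ?thesis
      using ab(1,2) zs_roots by (simp add: nonneg_coeffs_def)
  qed
qed

lemma root_nonneg_or_nonpos:
  assumes "set ws \<subseteq> {..<n}" "i < n"
  shows "nonneg_coeffs (word_act n M ws (simple_root i))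
    \<or> nonneg_coeffs (\<lambda>l. - word_act n M ws (simple_root i) l)"
proof -
  obtain xs where xs: "reduced_word xs" "word_act n M xs = word_act n M ws"
    using exists_reduced_word[OF assms(1)] by blast
  show ?thesis
  proof (cases "word_length_ge {..<n} (word_act n M xs \<circ> refl_act n M i) (length xs)")
    case True
    then show ?thesis
      using reduced_word_simple_root_nonneg[OF xs(1) assms(2)] xs(2) by simp
  next
    case False
    then obtain ys where ys: "set ys \<subseteq> {..<n}" "word_act n M ys = word_act n M xs \<circ> refl_act n M i"
      "length ys < length xs"
      by (auto simp: word_length_ge_def not_le)
    obtain zs where zs: "reduced_word zs" "word_act n M zs = word_act n M ys"
      using exists_reduced_word[OF ys(1)] by blast
    have "length zs \<le> length ys"
      using zs ys(1) by (auto simp: reduced_word_def word_length_ge_def)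
    have zs_i: "word_act n M zs \<circ> refl_act n M i = word_act n M xs"
      using zs(2) ys(2) assms(2) by (simp add: fun_eq_iff refl_act_refl_act diag_eq_2)
    then have "word_length_ge {..<n} (word_act n M zs \<circ> refl_act n M i) (length zs)"
      using xs(1) \<open>length zs \<le> length ys\<close> ys(3) by (auto simp: reduced_word_def word_length_ge_def)
    then have "nonneg_coeffs (word_act n M zs (simple_root i))"
      by (rule reduced_word_simple_root_nonneg[OF zs(1) assms(2)])
    moreover have "word_act n M ws (simple_root i) = (\<lambda>l. - word_act n M zs (simple_root i) l)"
      using fun_cong[OF zs_i, of "simple_root i"] xs(2) assms(2)
      by (simp add: refl_act_simple_root diag_eq_2 word_act_uminus)
    ultimately show ?thesis
      by (simp add: nonneg_coeffs_def)
  qed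
qed

end

section \<open>The numbers game\<close>

lemma root_functional_simple_root:
  assumes "i < n"
  shows "root_functional n (simple_root i) x = x i"
proof -
  have "root_functional n (simple_root i) x = (\<Sum>j<n. if j = i then x i else 0)"
    unfolding root_functional_def simple_root_def by (intro sum.cong) auto
  then show ?thesis
    using assms by simp
qed

lemma root_functional_at_simple_root:
  assumes "i < n"
  shows "root_functional n c (simple_root i) = c i"
proof -
  have "root_functional n c (simple_root i) = (\<Sum>j<n. if j = i then c i else 0)"
    unfolding root_functional_def simple_root_def by (intro sum.cong) auto
  then show ?thesis
    using assms by simp
qed

lemma root_functional_fire:
  assumes "i < n"
  shows "root_functional n c (fire M i x) = root_functional n (refl_act n M i c) x"
proof -
  have "root_functional n (refl_act n M i c) x
      = (\<Sum>j<n. c j * x j + (if j = i then - coroot n M i c * x i else 0))"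
    by (auto simp: root_functional_def refl_act_eq_coroot algebra_simps intro!: sum.cong)
  also have "\<dots> = (\<Sum>j<n. c j * x j) - coroot n M i c * x i"
    using assms by (simp add: sum.distrib)
  also have "\<dots> = root_functional n c (fire M i x)"
    by (simp add: root_functional_def fire_def coroot_def algebra_simps sum_subtractf
        sum_distrib_left sum_distrib_right)
  finally show ?thesis
    by simp
qed

lemma root_functional_play:
  assumes "t \<le> k" "\<And>u. u < k \<Longrightarrow> s u < n"
  shows "root_functional n (word_act n M (map s [t..<k]) v) (play M lam s t)
       = root_functional n v (play M lam s k)"
  using assms
proof (induction k arbitrary: v)
  case 0
  then show ?case by simp
next
  case (Suc k)
  show ?case
  proof (cases "t = Suc k")
    case True
    then show ?thesis by simp
  next
    case False
    then have "t \<le> k"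
      using Suc.prems(1) by simp
    then have "word_act n M (map s [t..<Suc k]) v = word_act n M (map s [t..<k]) (refl_act n M (s k) v)"
      by (simp add: word_act_append)
    then show ?thesis
      using Suc.IH[OF \<open>t \<le> k\<close>] Suc.prems(2) by (simp add: root_functional_fire)
  qed
qed

lemma root_functional_inj:
  assumes "root_functional n u = root_functional n v" "\<And>i. n \<le> i \<Longrightarrow> u i = 0" "\<And>i. n \<le> i \<Longrightarrow> v i = 0"
  shows "u = v"
proof
  fix i
  show "u i = v i"
  proof (cases "i < n")
    case True
    then show ?thesis
      using fun_cong[OF assms(1), of "simple_root i"] by (simp add: root_functional_at_simple_root)
  next
    case False
    then show ?thesis
      using assms(2,3) by simp
  qed
qed

lemma word_act_vanishes:
  "set ws \<subseteq> {..<n} \<Longrightarrow> n \<le> i \<Longrightarrow> (\<And>i. n \<le> i \<Longrightarrow> v i = 0) \<Longrightarrow> word_act n M ws v i = 0"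
  by (induction ws) (auto simp: refl_act_def)

lemma root_functional_fire_nonpos:
  assumes "i < n" "M i i = 2" "0 < x i" "nonneg_coeffs v" "nonneg_coeffs (\<lambda>l. - refl_act n M i v l)"
  shows "root_functional n v (fire M i x) \<le> 0"
proof -
  have "v l = 0" if "l \<noteq> i" for l
  proof -
    have "0 \<le> - refl_act n M i v l" "0 \<le> v l"
      using assms(4,5) by (simp_all add: nonneg_coeffs_def)
    moreover have "refl_act n M i v l = v l"
      using that by (simp add: refl_act_def)
    ultimately show ?thesis
      by simp
  qed
  then have "root_functional n v (fire M i x) = (\<Sum>l<n. if l = i then v i * fire M i x i else 0)"
    unfolding root_functional_def by (intro sum.cong) auto
  also have "\<dots> = - (v i * x i)"
    using assms(1,2) by (simp add: fire_def)
  also have "\<dots> \<le> 0"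
    using assms(3,4) by (simp add: nonneg_coeffs_def)
  finally show ?thesis .
qed

lemma game_sequence_legal:
  assumes "game_sequence n M lam L s" "enat k < L" "t \<le> k"
  shows "s t < n \<and> 0 < play M lam s t (s t)"
  using assms le_less_trans[of "enat t" "enat k" L] unfolding game_sequence_def by auto

lemma exists_switch_point:
  assumes "\<not> P a" "P b" "a \<le> b"
  shows "\<exists>t. a \<le> t \<and> t < b \<and> \<not> P t \<and> P (Suc t)"
  using assms
proof (induction b)
  case 0
  then show ?case by simp
next
  case (Suc b)
  then have "a \<le> b"
    by (metis le_Suc_eq)
  then show ?case
    using Suc by (cases "P b") (auto intro: less_SucI)
qed

lemma (in egcm) beta_functional_eq_imp_suffix_root:
  assumes "\<And>t. t \<le> k \<Longrightarrow> s t < n" "j < k"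
    and "root_functional n (beta n M s k) = root_functional n (beta n M s j)"
  shows "word_act n M (map s [Suc j..<k]) (simple_root (s k)) = (\<lambda>l. - simple_root (s j) l)"
proof -
  let ?w = "map s [0..<j]" and ?tail = "word_act n M (map s [j..<k]) (simple_root (s k))"
  have w: "set ?w \<subseteq> {..<n}"
    using assms(1,2) by auto
  have s_j: "s j < n"
    using assms(1,2) by simp
  have "[0..<k] = [0..<j] @ [j..<k]"
    using assms(2) upt_add_eq_append[of 0 j "k - j"] by simp
  then have beta_k: "beta n M s k = word_act n M ?w ?tail"
    by (simp add: beta_eq_word_act word_act_append)
  have beta_j: "beta n M s j = word_act n M ?w (simple_root (s j))"
    by (simp add: beta_eq_word_act)
  have "beta n M s m i = 0" if "m \<le> k" "n \<le> i" for m i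
    using assms(1) that(1) unfolding beta_eq_word_act
    by (intro word_act_vanishes[OF _ that(2)]) (auto simp: simple_root_def dest: leD)
  then have "beta n M s k = beta n M s j"
    using root_functional_inj[OF assms(3)] assms(2) by simp
  then have "?tail = simple_root (s j)"
    unfolding beta_k beta_j by (rule word_act_inj[OF w])
  moreover have "[j..<k] = j # [Suc j..<k]"
    using assms(2) by (simp add: upt_conv_Cons)
  ultimately have "refl_act n M (s j) (word_act n M (map s [Suc j..<k]) (simple_root (s k))) = simple_root (s j)"
    by simp
  then have "word_act n M (map s [Suc j..<k]) (simple_root (s k)) = refl_act n M (s j) (simple_root (s j))"
    using refl_act_refl_act[of "s j" n M, OF s_j diag_eq_2[OF s_j]] by metis
  then show ?thesis
    by (simp add: refl_act_simple_root[of "s j" n M, OF s_j diag_eq_2[OF s_j]])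
qed

lemma suffix_root_functional_pos:
  assumes "\<And>t. t \<le> k \<Longrightarrow> s t < n \<and> 0 < play M lam s t (s t)" "t \<le> k"
  shows "0 < root_functional n (word_act n M (map s [t..<k]) (simple_root (s k))) (play M lam s t)"
  using root_functional_play[OF assms(2), of s n M] assms(1)
  by (simp add: root_functional_simple_root)

lemma (in egcm) legal_firings_root_functionals_distinct:
  assumes legal: "\<And>t. t \<le> k \<Longrightarrow> s t < n \<and> 0 < play M lam s t (s t)" and "j < k"
  shows "root_functional n (beta n M s k) \<noteq> root_functional n (beta n M s j)"
proof
  assume eq: "root_functional n (beta n M s k) = root_functional n (beta n M s j)"
  define root where "root t = word_act n M (map s [t..<k]) (simple_root (s k))" for t
  have "root (Suc j) = (\<lambda>l. - simple_root (s j) l)"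
    unfolding root_def using legal \<open>j < k\<close> eq by (intro beta_functional_eq_imp_suffix_root) auto
  then have "\<not> nonneg_coeffs (root (Suc j))"
    by (auto simp: nonneg_coeffs_def simple_root_def)
  moreover have "nonneg_coeffs (root k)"
    by (simp add: root_def nonneg_coeffs_def simple_root_def)
  ultimately obtain t where t: "t < k" "\<not> nonneg_coeffs (root t)" "nonneg_coeffs (root (Suc t))"
    using exists_switch_point[of "\<lambda>t. nonneg_coeffs (root t)"] \<open>j < k\<close> by (meson Suc_leI)
  have "root t = refl_act n M (s t) (root (Suc t))"
    by (simp add: root_def upt_conv_Cons t(1))
  moreover have "set (map s [t..<k]) \<subseteq> {..<n}"
    using legal t(1) by auto
  ultimately have "nonneg_coeffs (\<lambda>l. - refl_act n M (s t) (root (Suc t)) l)"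
    using root_nonneg_or_nonpos[of "map s [t..<k]" "s k"] legal t(2) by (simp add: root_def)
  then have "root_functional n (root (Suc t)) (fire M (s t) (play M lam s t)) \<le> 0"
    using legal[of t] t diag_eq_2 by (intro root_functional_fire_nonpos) auto
  moreover have "0 < root_functional n (root (Suc t)) (play M lam s (Suc t))"
    unfolding root_def using legal t(1) by (intro suffix_root_functional_pos) auto
  ultimately show False
    by simp
qed

theorem proposition5p4:
  fixes n :: nat and M :: "nat \<Rightarrow> nat \<Rightarrow> real" and lam :: "nat \<Rightarrow> real"
    and L :: enat and s :: "nat \<Rightarrow> nat"
  assumes "is_EGCM n M"
    and "strongly_dominant n lam"
    and "game_sequence n M lam L s"
  shows "\<forall>j k. j < k \<and> enat k < L \<longrightarrow>
           root_functional n (beta n M s k) \<noteq> root_functional n (beta n M s j)"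
proof (intro allI impI)
  interpret egcm n M
    by (rule egcm.intro) (rule assms(1))
  fix j k
  assume "j < k \<and> enat k < L"
  then show "root_functional n (beta n M s k) \<noteq> root_functional n (beta n M s j)"
    using game_sequence_legal[OF assms(3)] by (intro legal_firings_root_functionals_distinct) auto
qed

end
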